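(* Let $m$ be even, $\mathcal{M}$ a set of $m$ items, and let $H=(\mathcal{M},E)$ be an $m/2$-uniform hypergraph such that for every $S\subseteq\mathcal{M}$ with $|S|=m/2$ exactly one of $S$ and $\mathcal{M}\setminus S$ belongs to $E$. Then there exists a monotone submodular valuation function $v':2^{\mathcal{M}}\to\mathbb{R}_{\ge 0}$ with $v'(S)\ne v'(\mathcal{M}\setminus S)$ for all $|S|=m/2$ such that $H^{v'}=H$.
   Context: For a valuation $v$ with $v(S)\neq v(\mathcal{M}\setminus S)$ whenever $|S|=m/2$, the hypergraph $H^{v}=(\mathcal{M},E_v)$ has edge set $E_v=\{S\subset\mathcal{M}:|S|=m/2,\ v(S)>v(\mathcal{M}\setminus S)\}$. A set function $v$ is monotone if $S\subseteq T$ implies $v(S)\le v(T)$, and submodular if $v(S\cup\{g\})-v(S)\ge v(T\cup\{g\})-v(T)$ for all $S\subseteq T$ and $g\notin T$. *)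

theory Defs
  imports Complex_Main
begin

text \<open>Valuations on the ground set M are functions on subsets of M (values
outside Pow M are irrelevant).\<close>

definition monotone_val :: "'a set \<Rightarrow> ('a set \<Rightarrow> real) \<Rightarrow> bool" where
  "monotone_val M v \<longleftrightarrow> (\<forall>S T. S \<subseteq> T \<and> T \<subseteq> M \<longrightarrow> v S \<le> v T)"

definition submodular_val :: "'a set \<Rightarrow> ('a set \<Rightarrow> real) \<Rightarrow> bool" where
  "submodular_val M v \<longleftrightarrow> (\<forall>S T g. S \<subseteq> T \<and> T \<subseteq> M \<and> g \<in> M \<and> g \<notin> T \<longrightarrow>
      v (insert g S) - v S \<ge> v (insert g T) - v T)"

definition hyper_edges :: "'a set \<Rightarrow> ('a set \<Rightarrow> real) \<Rightarrow> 'a set set" where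
  "hyper_edges M v = {S. S \<subseteq> M \<and> 2 * card S = card M \<and> v S > v (M - S)}"

end

theory Submission
  imports Defs
begin

text \<open>Take v S = q (card S) + [S \<in> E]/2 with the strictly concave, increasing profile
q k = k (2m - k). Since q increases by at least 1 per item and its marginals drop by at
least 2 per item, a perturbation of size at most 1/2 preserves monotonicity and
submodularity. A balanced set and its complement have equal cardinality, so the
comparison v S > v (M - S) is decided by the perturbation alone, i.e. by membership in E.\<close>

definition quadratic_profile :: "nat \<Rightarrow> nat \<Rightarrow> real" where
  "quadratic_profile n k = real k * (2 * real n - real k)"

lemma quadratic_profile_nonneg: "k \<le> n \<Longrightarrow> 0 \<le> quadratic_profile n k"
  by (simp add: quadratic_profile_def)

lemma quadratic_profile_increase:
  assumes "s < t" and "t \<le> n"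
  shows "quadratic_profile n s + 1 \<le> quadratic_profile n t"
proof -
  have "1 * 1 \<le> (real t - real s) * (2 * real n - real t - real s)"
    using assms by (intro mult_mono) auto
  then show ?thesis
    by (simp add: quadratic_profile_def algebra_simps)
qed

lemma quadratic_profile_marginal_decrease:
  assumes "s < t"
  shows "quadratic_profile n (Suc t) - quadratic_profile n t + 2
           \<le> quadratic_profile n (Suc s) - quadratic_profile n s"
  using assms by (simp add: quadratic_profile_def algebra_simps)

lemma monotone_val_card_plus_bounded:
  assumes "finite M"
    and increase: "\<And>s t. s < t \<Longrightarrow> t \<le> card M \<Longrightarrow> f s + c \<le> f t"
    and bounds: "\<And>S. 0 \<le> p S \<and> p S \<le> c"
  shows "monotone_val M (\<lambda>S. f (card S) + p S)"
  unfolding monotone_val_def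
proof (intro allI impI)
  fix S T assume "S \<subseteq> T \<and> T \<subseteq> M"
  then have ST: "S \<subseteq> T" "T \<subseteq> M" by auto
  show "f (card S) + p S \<le> f (card T) + p T"
  proof (cases "S = T")
    case False
    have "finite T" using ST assms(1) finite_subset by blast
    then have "card S < card T" using ST False psubset_card_mono by blast
    moreover have "card T \<le> card M" using ST assms(1) card_mono by blast
    ultimately show ?thesis using increase bounds[of S] bounds[of T] by force
  qed simp
qed

lemma submodular_val_card_plus_bounded:
  assumes "finite M"
    and decrease: "\<And>s t. s < t \<Longrightarrow> t < card M \<Longrightarrow> f (Suc t) - f t + 2 * c \<le> f (Suc s) - f s"
    and bounds: "\<And>S. 0 \<le> p S \<and> p S \<le> c"
  shows "submodular_val M (\<lambda>S. f (card S) + p S)"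
  unfolding submodular_val_def
proof (intro allI impI)
  fix S T g assume "S \<subseteq> T \<and> T \<subseteq> M \<and> g \<in> M \<and> g \<notin> T"
  then have ST: "S \<subseteq> T" "T \<subseteq> M" "g \<in> M" "g \<notin> T" by auto
  show "f (card (insert g T)) + p (insert g T) - (f (card T) + p T)
          \<le> f (card (insert g S)) + p (insert g S) - (f (card S) + p S)"
  proof (cases "S = T")
    case False
    have T: "finite T" using ST assms(1) finite_subset by blast
    then have S: "finite S" using ST finite_subset by blast
    have "card S < card T" using ST False T psubset_card_mono by blast
    moreover have "Suc (card T) \<le> card M"
      using ST T assms(1) card_mono[of M "insert g T"] by simp
    ultimately have "f (Suc (card T)) - f (card T) + 2 * c \<le> f (Suc (card S)) - f (card S)"
      using decrease by simp
    moreover have "g \<notin> S" using ST by blast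
    then have "card (insert g T) = Suc (card T)" "card (insert g S) = Suc (card S)"
      using ST S T by simp_all
    ultimately show ?thesis
      using bounds[of S] bounds[of T] bounds[of "insert g S"] bounds[of "insert g T"]
      by (simp only:) linarith
  qed simp
qed

lemma quadratic_profile_plus_bounded_nonneg:
  assumes "finite M" and "S \<subseteq> M" and "0 \<le> p S"
  shows "0 \<le> quadratic_profile (card M) (card S) + p S"
  using assms quadratic_profile_nonneg[OF card_mono[OF assms(1,2)]] by simp

lemma monotone_val_quadratic_profile_plus_bounded:
  assumes "finite M" and "\<And>S. 0 \<le> p S \<and> p S \<le> 1/2"
  shows "monotone_val M (\<lambda>S. quadratic_profile (card M) (card S) + p S)"
proof (rule monotone_val_card_plus_bounded[OF assms(1) _ assms(2)])
  fix s t assume "s < t" "t \<le> card M"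
  then show "quadratic_profile (card M) s + 1/2 \<le> quadratic_profile (card M) t"
    using quadratic_profile_increase by fastforce
qed

lemma submodular_val_quadratic_profile_plus_bounded:
  assumes "finite M" and "\<And>S. 0 \<le> p S \<and> p S \<le> 1/2"
  shows "submodular_val M (\<lambda>S. quadratic_profile (card M) (card S) + p S)"
proof (rule submodular_val_card_plus_bounded[OF assms(1) _ assms(2)])
  fix s t :: nat assume "s < t"
  then show "quadratic_profile (card M) (Suc t) - quadratic_profile (card M) t + 2 * (1/2)
      \<le> quadratic_profile (card M) (Suc s) - quadratic_profile (card M) s"
    using quadratic_profile_marginal_decrease[of s t "card M"] by simp
qed

lemma card_Diff_balanced:
  assumes "finite M" and "S \<subseteq> M" and "2 * card S = card M"
  shows "card (M - S) = card S"
  using assms by (simp add: card_Diff_subset finite_subset)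

lemma hyper_edges_card_plus:
  assumes "finite M"
  shows "hyper_edges M (\<lambda>S. f (card S) + p S)
           = {S. S \<subseteq> M \<and> 2 * card S = card M \<and> p S > p (M - S)}"
  using card_Diff_balanced[OF assms] by (auto simp: hyper_edges_def)

lemma card_plus_indicator_balanced_neq:
  fixes f :: "nat \<Rightarrow> real"
  assumes "finite M" and "S \<subseteq> M" and "2 * card S = card M"
    and "(S \<in> E) \<noteq> (M - S \<in> E)" and "c \<noteq> 0"
  shows "f (card S) + (if S \<in> E then c else 0) \<noteq> f (card (M - S)) + (if M - S \<in> E then c else 0)"
  using assms card_Diff_balanced[OF assms(1-3)] by auto

lemma hyper_edges_card_plus_indicator:
  fixes f :: "nat \<Rightarrow> real"
  assumes "finite M"
    and edges: "\<forall>S\<in>E. S \<subseteq> M \<and> 2 * card S = card M"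
    and exclusive: "\<forall>S. S \<subseteq> M \<and> 2 * card S = card M \<longrightarrow> (S \<in> E) \<noteq> (M - S \<in> E)"
    and "c > 0"
  shows "hyper_edges M (\<lambda>S. f (card S) + (if S \<in> E then c else 0)) = E"
proof -
  have membership: "S \<subseteq> M \<and> 2 * card S = card M
      \<and> (if M - S \<in> E then c else 0) < (if S \<in> E then c else 0) \<longleftrightarrow> S \<in> E" for S
  proof
    assume "S \<subseteq> M \<and> 2 * card S = card M \<and> (if M - S \<in> E then c else 0) < (if S \<in> E then c else 0)"
    then show "S \<in> E" using \<open>c > 0\<close> by (auto split: if_splits)
  next
    assume "S \<in> E"
    then have "S \<subseteq> M" "2 * card S = card M" using edges by simp_all
    moreover from this have "M - S \<notin> E" using exclusive \<open>S \<in> E\<close> by blast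
    ultimately show "S \<subseteq> M \<and> 2 * card S = card M
        \<and> (if M - S \<in> E then c else 0) < (if S \<in> E then c else 0)"
      using \<open>S \<in> E\<close> \<open>c > 0\<close> by simp
  qed
  show ?thesis
    unfolding hyper_edges_card_plus[OF assms(1), of f "\<lambda>S. if S \<in> E then c else 0"]
    by (simp only: set_eq_iff mem_Collect_eq membership simp_thms)
qed

theorem mainTheorem5:
  fixes M :: "'a set" and E :: "'a set set" and m :: nat
  assumes "finite M" and "card M = m" and "even m"
    and "\<forall>S\<in>E. S \<subseteq> M \<and> card S = m div 2"
    and "\<forall>S. S \<subseteq> M \<and> card S = m div 2 \<longrightarrow> ((S \<in> E) \<noteq> (M - S \<in> E))"
  shows "\<exists>v :: 'a set \<Rightarrow> real.
           (\<forall>S\<subseteq>M. v S \<ge> 0) \<and> monotone_val M v \<and> submodular_val M v \<and>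
           (\<forall>S. S \<subseteq> M \<and> card S = m div 2 \<longrightarrow> v S \<noteq> v (M - S)) \<and>
           hyper_edges M v = E"
proof -
  define p :: "'a set \<Rightarrow> real" where "p S = (if S \<in> E then 1/2 else 0)" for S
  define v where "v S = quadratic_profile (card M) (card S) + p S" for S
  have bounds: "0 \<le> p S \<and> p S \<le> 1/2" for S
    by (simp add: p_def)
  have half: "card S = m div 2 \<longleftrightarrow> 2 * card S = card M" for S
    using assms(2,3) by auto
  have edges: "\<forall>S\<in>E. S \<subseteq> M \<and> 2 * card S = card M"
    using assms(4) by (simp only: half)
  have exclusive: "\<forall>S. S \<subseteq> M \<and> 2 * card S = card M \<longrightarrow> (S \<in> E) \<noteq> (M - S \<in> E)"
    using assms(5) by (simp only: half)
  have "\<forall>S. S \<subseteq> M \<and> card S = m div 2 \<longrightarrow> v S \<noteq> v (M - S)"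
    unfolding half v_def p_def
    using card_plus_indicator_balanced_neq[OF assms(1)] exclusive by simp
  moreover have "hyper_edges M v = E"
    unfolding v_def[abs_def] p_def[abs_def]
    by (rule hyper_edges_card_plus_indicator[OF assms(1) edges exclusive]) simp
  ultimately show ?thesis
    using quadratic_profile_plus_bounded_nonneg[OF assms(1)] bounds
      monotone_val_quadratic_profile_plus_bounded[OF assms(1) bounds]
      submodular_val_quadratic_profile_plus_bounded[OF assms(1) bounds]
    by (intro exI[of _ v]) (simp add: v_def[abs_def])
qed

end
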